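(* Let $\kappa=(k_0,k_1,k_2,\dots)$ be an infinite sequence of natural numbers with $k_i>1$ for all $i$, and let $\sigma\kappa=(k_1,k_2,\dots)$ denote its shift. Define $E_\kappa$ on finite sequences of natural numbers by $$E_\kappa([\,])=0,\qquad E_\kappa([x_0,x_1,\dots,x_m])=C_{k_0}\big(x_0,\,E_{\sigma\kappa}([x_1,\dots,x_m])\big).$$ Then $E_\kappa$ is a bijection from the set of finite sequences of natural numbers onto $\mathbb{N}$. In particular, for each $b>1$ the map $\mathrm{nats2nat}_b:=E_{(b,b,b,\dots)}$ is a bijection between finite sequences of naturals and $\mathbb{N}$. Its inverse $\mathrm{nat2nats}_b$ is given by $\mathrm{nat2nats}_b(0)=[\,]$ and, for $n>0$, $\mathrm{nat2nats}_b(n)=x:\mathrm{nat2nats}_b(y')$, where $(x,y')=C_b^{-1}(n)$.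
   Context: $\mathbb{N}=\{0,1,2,\dots\}$. For $b>1$, $C_b:\mathbb{N}\times\mathbb{N}\to\mathbb{N}\setminus\{0\}$ is defined by $C_b(x,y')=b^x\,(y'+\lfloor y'/(b-1)\rfloor+1)$. This map is a bijection; its first component is $x=\nu_b(n)$, the $b$-adic valuation of $n$. The notation $x:s$ denotes the sequence with first element $x$ followed by the sequence $s$. *)

theory Defs
  imports Main
begin

definition C :: "nat \<Rightarrow> nat \<Rightarrow> nat \<Rightarrow> nat" where
  "C b x y' = b ^ x * (y' + y' div (b - 1) + 1)"

definition C_inv :: "nat \<Rightarrow> nat \<Rightarrow> nat \<times> nat" where
  "C_inv b n = the_inv_into UNIV (\<lambda>(x, y'). C b x y') n"

primrec E :: "(nat \<Rightarrow> nat) \<Rightarrow> nat list \<Rightarrow> nat" where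
  "E \<kappa> [] = 0"
| "E \<kappa> (x # xs) = C (\<kappa> 0) x (E (\<lambda>i. \<kappa> (Suc i)) xs)"

definition nats2nat :: "nat \<Rightarrow> nat list \<Rightarrow> nat" where
  "nats2nat b = E (\<lambda>_. b)"

definition nat2nats :: "nat \<Rightarrow> nat \<Rightarrow> nat list" where
  "nat2nats b = inv (nats2nat b)"

end

theory Submission
  imports Defs "HOL-Computational_Algebra.Euclidean_Algorithm"
begin

text \<open>Every positive n factors uniquely as b^x * m with b not dividing m (x is the b-adic
  valuation), and y' \<mapsto> y' + \<lfloor>y'/(b-1)\<rfloor> + 1 enumerates the positive integers not divisible
  by b in increasing order; hence C_b is a bijection from \<nat> \<times> \<nat> onto the positive integers.
  Since y' < C_b(x, y'), strong induction on n shows that E_\<kappa> hits every n exactly once,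
  and nat2nats_b unfolds the inverse one C_b^{-1} step at a time.\<close>

definition nth_nonmultiple :: "nat \<Rightarrow> nat \<Rightarrow> nat" where
  "nth_nonmultiple b y = y + y div (b - 1) + 1"

lemma C_eq_power_mult_nth_nonmultiple: "C b x y = b ^ x * nth_nonmultiple b y"
  unfolding C_def nth_nonmultiple_def by simp

lemma strict_mono_nth_nonmultiple: "strict_mono (nth_nonmultiple b)"
  by (rule strict_monoI) (simp add: nth_nonmultiple_def add_less_le_mono div_le_mono)

lemma nth_nonmultiple_div_mod:
  assumes "b > 1" and "r < b - 1"
  shows "nth_nonmultiple b (q * (b - 1) + r) = q * b + (r + 1)"
proof -
  obtain c where c: "b = Suc c"
    using assms(1) by (cases b) auto
  have "(q * c + r) div c = q"
    using assms by (simp add: c)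
  then show ?thesis
    by (simp add: nth_nonmultiple_def c)
qed

lemma not_dvd_nth_nonmultiple:
  assumes "b > 1"
  shows "\<not> b dvd nth_nonmultiple b y"
proof -
  define q r where "q = y div (b - 1)" and "r = y mod (b - 1)"
  have r: "r < b - 1"
    using assms by (simp add: r_def)
  have "y = q * (b - 1) + r"
    unfolding q_def r_def by (rule div_mult_mod_eq[symmetric])
  then have "nth_nonmultiple b y = q * b + (r + 1)"
    using nth_nonmultiple_div_mod[OF assms r] by simp
  moreover have "\<not> b dvd r + 1"
    using r by (simp add: nat_dvd_not_less)
  ultimately show ?thesis
    by (metis dvd_add_times_triv_left_iff mult.commute)
qed

lemma nth_nonmultiple_surj:
  assumes "b > 1" and "\<not> b dvd m"
  obtains y where "nth_nonmultiple b y = m"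
proof
  define r where "r = m mod b - 1"
  have "m mod b \<noteq> 0"
    using assms(2) by (simp add: dvd_eq_mod_eq_0)
  moreover have "m mod b < b"
    using assms(1) by simp
  ultimately have "m mod b = r + 1" and "r < b - 1"
    unfolding r_def by linarith+
  then show "nth_nonmultiple b (m div b * (b - 1) + r) = m"
    using nth_nonmultiple_div_mod[OF assms(1)] div_mult_mod_eq[of m b] by simp
qed

lemma multiplicity_C:
  assumes "b > 1"
  shows "multiplicity b (C b x y) = x"
  using assms not_dvd_nth_nonmultiple
  by (intro multiplicity_decomposeI[OF C_eq_power_mult_nth_nonmultiple]) auto

lemma C_inject:
  assumes "b > 1"
  shows "C b x y = C b x' y' \<longleftrightarrow> x = x' \<and> y = y'"
proof
  assume eq: "C b x y = C b x' y'"
  then have "x = x'"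
    using multiplicity_C[OF assms] by metis
  with eq assms have "nth_nonmultiple b y = nth_nonmultiple b y'"
    by (simp add: C_eq_power_mult_nth_nonmultiple)
  with \<open>x = x'\<close> show "x = x' \<and> y = y'"
    using strict_mono_eq[OF strict_mono_nth_nonmultiple] by simp
qed simp

lemma C_surj:
  assumes "b > 1" and "n > 0"
  obtains x y where "n = C b x y"
proof -
  obtain m where m: "n = b ^ multiplicity b n * m" and "\<not> b dvd m"
    using assms multiplicity_decompose'[of n b] by (simp; blast)
  then obtain y where "nth_nonmultiple b y = m"
    using assms(1) nth_nonmultiple_surj by blast
  with m show ?thesis
    using that[of "multiplicity b n" y] by (simp add: C_eq_power_mult_nth_nonmultiple)
qed

lemma less_C:
  assumes "b > 0"
  shows "y < C b x y"
proof -
  have "y < nth_nonmultiple b y"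
    by (simp add: nth_nonmultiple_def)
  also have "\<dots> \<le> b ^ x * nth_nonmultiple b y"
    using assms by simp
  finally show ?thesis
    by (simp add: C_eq_power_mult_nth_nonmultiple)
qed

lemma C_inv_C:
  assumes "b > 1"
  shows "C_inv b (C b x y) = (x, y)"
proof -
  have "inj (\<lambda>(x, y). C b x y)"
    using C_inject[OF assms] by (auto intro: injI)
  from the_inv_into_f_f[OF this, of "(x, y)"] show ?thesis
    unfolding C_inv_def by simp
qed

lemma E_eq_0_iff:
  assumes "\<kappa> 0 > 0"
  shows "E \<kappa> xs = 0 \<longleftrightarrow> xs = []"
  using less_C[OF assms, THEN gr_implies_not0] by (cases xs) simp_all

lemma inj_E:
  assumes "\<forall>i. \<kappa> i > 1"
  shows "inj (E \<kappa>)"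
proof (rule injI)
  show "E \<kappa> xs = E \<kappa> ys \<Longrightarrow> xs = ys" for xs ys
    using assms
  proof (induction xs arbitrary: ys \<kappa>)
    case Nil
    then have "\<kappa> 0 > 0"
      by (metis gr_implies_not0 neq0_conv)
    with Nil show ?case
      using E_eq_0_iff[of \<kappa> ys] by simp
  next
    case (Cons x xs)
    then have "\<kappa> 0 > 0"
      by (metis gr_implies_not0 neq0_conv)
    with Cons.prems obtain y ys' where ys: "ys = y # ys'"
      using E_eq_0_iff[of \<kappa>] by (metis list.exhaust list.discI)
    with Cons.prems have "x = y \<and> E (\<lambda>i. \<kappa> (Suc i)) xs = E (\<lambda>i. \<kappa> (Suc i)) ys'"
      using C_inject by simp
    with Cons.prems Cons.IH[of "\<lambda>i. \<kappa> (Suc i)" ys'] ys show ?case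
      by simp
  qed
qed

lemma surj_E:
  assumes "\<forall>i. \<kappa> i > 1"
  shows "surj (E \<kappa>)"
proof -
  have "n \<in> range (E \<kappa>)" for n
    using assms
  proof (induction n arbitrary: \<kappa> rule: less_induct)
    case (less n)
    show ?case
    proof (cases "n = 0")
      case True
      then show ?thesis
        using E.simps(1) by (metis rangeI)
    next
      case False
      with less.prems obtain x y where n: "n = C (\<kappa> 0) x y"
        using C_surj[of "\<kappa> 0" n] by blast
      with less.prems have "y < n"
        using less_C[of "\<kappa> 0"] by (metis gr_implies_not0 neq0_conv)
      with less.IH[of y "\<lambda>i. \<kappa> (Suc i)"] less.prems obtain ys where "y = E (\<lambda>i. \<kappa> (Suc i)) ys"
        by auto
      with n have "n = E \<kappa> (x # ys)"
        by simp
      then show ?thesis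
        by (rule range_eqI)
    qed
  qed
  then show ?thesis
    by blast
qed

lemma bij_E:
  assumes "\<forall>i. \<kappa> i > 1"
  shows "bij (E \<kappa>)"
  using inj_E[OF assms] surj_E[OF assms] by (rule bijI)

lemma bij_nats2nat:
  assumes "b > 1"
  shows "bij (nats2nat b)"
  unfolding nats2nat_def using assms by (intro bij_E) simp

lemma nat2nats_nats2nat:
  assumes "b > 1"
  shows "nat2nats b (nats2nat b xs) = xs"
  unfolding nat2nats_def using bij_is_inj[OF bij_nats2nat[OF assms]] by (rule inv_f_f)

lemma nat2nats_C:
  assumes "b > 1"
  shows "nat2nats b (C b x y) = x # nat2nats b y"
proof -
  have "nats2nat b (nat2nats b y) = y"
    unfolding nat2nats_def using bij_is_surj[OF bij_nats2nat[OF assms]] by (rule surj_f_inv_f)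
  then have "C b x y = nats2nat b (x # nat2nats b y)"
    by (simp add: nats2nat_def)
  then show ?thesis
    using nat2nats_nats2nat[OF assms] by simp
qed

theorem mainTheorem3:
  shows "(\<forall>\<kappa> :: nat \<Rightarrow> nat. (\<forall>i. \<kappa> i > 1) \<longrightarrow> bij (E \<kappa>))
    \<and> (\<forall>b :: nat. b > 1 \<longrightarrow>
         bij (nats2nat b)
       \<and> nat2nats b 0 = []
       \<and> (\<forall>n > 0. nat2nats b n = fst (C_inv b n) # nat2nats b (snd (C_inv b n))))"
proof (intro conjI allI impI)
  fix \<kappa> :: "nat \<Rightarrow> nat"
  assume "\<forall>i. \<kappa> i > 1"
  then show "bij (E \<kappa>)"
    by (rule bij_E)
next
  fix b n :: nat
  assume b: "b > 1"
  show "bij (nats2nat b)"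
    using b by (rule bij_nats2nat)
  show "nat2nats b 0 = []"
    using nat2nats_nats2nat[OF b, of "[]"] by (simp add: nats2nat_def)
  assume "n > 0"
  then obtain x y where "n = C b x y"
    using C_surj[OF b] by blast
  then show "nat2nats b n = fst (C_inv b n) # nat2nats b (snd (C_inv b n))"
    using b by (simp add: C_inv_C nat2nats_C)
qed

end
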